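(* For all integers $m\ge 2$, $n\ge 2$, the state complexity of $L(M)^*\cap L(N)$, where $M$ ranges over complete DFAs with $m$ states and $N$ over complete DFAs with $n$ states (over a common alphabet), is exactly $\frac{3}{4}2^m\cdot n-n+1$: for every such $M,N$ some DFA with at most $\frac{3}{4}2^m\cdot n-n+1$ states accepts $L(M)^*\cap L(N)$, and there exist such $M,N$ for which the minimal complete DFA of $L(M)^*\cap L(N)$ has exactly $\frac{3}{4}2^m\cdot n-n+1$ states.
   Context: DFAs are complete deterministic finite automata; $L(M)$ is the accepted language; $L^*$ is the Kleene star. The state complexity of a regular language is the number of states of its minimal complete DFA; the state complexity of an operation is the maximum state complexity of its result over all argument DFAs of the given sizes. *)

theory Defs
  imports Main
begin

type_synonym ('s,'a) dfa = "'s set \<times> ('s \<Rightarrow> 'a \<Rightarrow> 's) \<times> 's \<times> 's set"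

definition states :: "('s,'a) dfa \<Rightarrow> 's set" where "states M = fst M"
definition delta :: "('s,'a) dfa \<Rightarrow> 's \<Rightarrow> 'a \<Rightarrow> 's" where "delta M = fst (snd M)"
definition start :: "('s,'a) dfa \<Rightarrow> 's" where "start M = fst (snd (snd M))"
definition finals :: "('s,'a) dfa \<Rightarrow> 's set" where "finals M = snd (snd (snd M))"

definition complete_dfa :: "'a set \<Rightarrow> ('s,'a) dfa \<Rightarrow> bool" where
  "complete_dfa Sig M \<longleftrightarrow> finite Sig \<and> finite (states M) \<and> start M \<in> states M
     \<and> finals M \<subseteq> states M
     \<and> (\<forall>q\<in>states M. \<forall>a\<in>Sig. delta M q a \<in> states M)"

definition delta_star :: "('s,'a) dfa \<Rightarrow> 's \<Rightarrow> 'a list \<Rightarrow> 's" where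
  "delta_star M q w = foldl (delta M) q w"

definition lang :: "'a set \<Rightarrow> ('s,'a) dfa \<Rightarrow> 'a list set" where
  "lang Sig M = {w. set w \<subseteq> Sig \<and> delta_star M (start M) w \<in> finals M}"

definition kstar :: "'a list set \<Rightarrow> 'a list set" where
  "kstar L = {concat ws | ws. \<forall>w\<in>set ws. w \<in> L}"

text \<open>State complexity: number of states of a minimal complete DFA over Sig for L
  (states taken from nat, which is no loss of generality for finite automata).\<close>
definition sc :: "'a set \<Rightarrow> 'a list set \<Rightarrow> nat" where
  "sc Sig L = (LEAST k. \<exists>D :: (nat,'a) dfa. complete_dfa Sig D \<and> card (states D) = k
                        \<and> lang Sig D = L)"

end

theory Submission imports Defs begin

(*
  Kleene star is recognised by the subset construction that re-inserts the
  start state of M whenever a final state is hit (star_step); running it in parallel with N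
  gives a deterministic machine (prod_step) whose only extra state (None, start N) remembers
  that the empty word has been read.  Every reachable state lies in prod_states M N: the
  pair (None, start N), or (Some S, p) with S a nonempty set of M-states that contains the
  start state whenever it meets a final state (and S a singleton if the only possible final
  state is the start state).  Counting these gives 1 + (3 * 2^(m-2) - 1) * n.

  A generic Myhill-Nerode argument shows that a DFA for the language of a
  machine has at least as many states as any set of reachable, pairwise distinguishable
  machine states.  For explicit witnesses over an alphabet of 8 (m + n) letters, all of
  prod_states is reachable and pairwise distinguishable, and it has exactly the claimed size.
*)

subsection \<open>Kleene star\<close>

lemma kstar_Nil [simp]: "[] \<in> kstar L"
  unfolding kstar_def by (auto intro: exI[of _ "[]"])

lemma kstar_append: "u \<in> kstar L \<Longrightarrow> v \<in> L \<Longrightarrow> u @ v \<in> kstar L"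
  unfolding kstar_def
proof clarify
  fix ws assume "\<forall>w\<in>set ws. w \<in> L" "v \<in> L"
  then show "\<exists>ws'. concat ws @ v = concat ws' \<and> (\<forall>w\<in>set ws'. w \<in> L)"
    by (intro exI[of _ "ws @ [v]"]) auto
qed

lemma concat_snoc_split:
  assumes "\<forall>w\<in>set ws. w \<in> L" and "concat ws = x @ [a]"
  shows "\<exists>u v. x = u @ v \<and> u \<in> kstar L \<and> v @ [a] \<in> L"
  using assms
proof (induction ws arbitrary: x rule: rev_induct)
  case Nil then show ?case by simp
next
  case (snoc y ws)
  show ?case
  proof (cases "y = []")
    case True then show ?thesis using snoc by auto
  next
    case False
    then obtain v where v: "y = v @ [a]" and x: "x = concat ws @ v"
      using snoc.prems(2) by (cases y rule: rev_cases) auto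
    have "concat ws \<in> kstar L" unfolding kstar_def using snoc.prems(1) by auto
    then show ?thesis using v x snoc.prems(1) by auto
  qed
qed

lemma kstar_snoc_iff:
  "x @ [a] \<in> kstar L \<longleftrightarrow> (\<exists>u v. x = u @ v \<and> u \<in> kstar L \<and> v @ [a] \<in> L)"
proof
  assume "x @ [a] \<in> kstar L"
  then obtain ws where "x @ [a] = concat ws" "\<forall>w\<in>set ws. w \<in> L" unfolding kstar_def by auto
  then show "\<exists>u v. x = u @ v \<and> u \<in> kstar L \<and> v @ [a] \<in> L" using concat_snoc_split by metis
next
  assume "\<exists>u v. x = u @ v \<and> u \<in> kstar L \<and> v @ [a] \<in> L"
  then show "x @ [a] \<in> kstar L" using kstar_append by fastforce
qed

subsection \<open>Deterministic machines and DFAs\<close>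

text \<open>The language of a deterministic machine with transition function \<open>d\<close>, start state \<open>s\<close>
  and acceptance predicate \<open>acc\<close>, possibly with infinitely many (unreachable) states.\<close>
definition run_lang :: "'a set \<Rightarrow> ('q \<Rightarrow> 'a \<Rightarrow> 'q) \<Rightarrow> 'q \<Rightarrow> ('q \<Rightarrow> bool) \<Rightarrow> 'a list set" where
  "run_lang Sig d s acc = {w. set w \<subseteq> Sig \<and> acc (foldl d s w)}"

lemma delta_star_in_states:
  assumes "complete_dfa Sig D" "q \<in> states D" "set w \<subseteq> Sig"
  shows "delta_star D q w \<in> states D"
  using assms(2,3)
proof (induction w arbitrary: q)
  case Nil then show ?case by (simp add: delta_star_def)
next
  case (Cons a w)
  have "delta D q a \<in> states D" using assms(1) Cons.prems unfolding complete_dfa_def by auto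
  then show ?case using Cons by (simp add: delta_star_def)
qed

lemma dfa_rename_nat:
  assumes "complete_dfa Sig A"
  shows "\<exists>D :: (nat,'a) dfa. complete_dfa Sig D \<and> card (states D) = card (states A)
            \<and> lang Sig D = lang Sig A"
proof -
  let ?Q = "states A"
  have fin: "finite ?Q" and st: "start A \<in> ?Q" and fs: "finals A \<subseteq> ?Q"
    and cl: "\<And>q a. q \<in> ?Q \<Longrightarrow> a \<in> Sig \<Longrightarrow> delta A q a \<in> ?Q"
    using assms unfolding complete_dfa_def by auto
  obtain h where "bij_betw h ?Q {0..<card ?Q}" using ex_bij_betw_finite_nat[OF fin] by blast
  then have inj: "inj_on h ?Q" using bij_betw_def by blast
  define D :: "(nat,'a) dfa" where
    "D = (h ` ?Q, \<lambda>q a. h (delta A (inv_into ?Q h q) a), h (start A), h ` finals A)"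
  have D: "states D = h ` ?Q" "start D = h (start A)" "finals D = h ` finals A"
    "\<And>q a. delta D q a = h (delta A (inv_into ?Q h q) a)"
    unfolding D_def states_def start_def finals_def delta_def by auto
  have run: "delta_star D (h q) w = h (delta_star A q w)" if "q \<in> ?Q" "set w \<subseteq> Sig" for q w
    using that
  proof (induction w arbitrary: q)
    case Nil then show ?case by (simp add: delta_star_def)
  next
    case (Cons a w)
    have "delta D (h q) a = h (delta A q a)" using D(4) inv_into_f_f[OF inj Cons.prems(1)] by simp
    then show ?case using Cons.IH[of "delta A q a"] Cons.prems cl by (simp add: delta_star_def)
  qed
  have "complete_dfa Sig D"
    using assms fin st fs cl unfolding complete_dfa_def D by (auto simp: inv_into_f_f[OF inj])
  moreover have "card (states D) = card ?Q" unfolding D using card_image[OF inj] .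
  moreover have "lang Sig D = lang Sig A"
  proof -
    have "delta_star D (start D) w \<in> finals D \<longleftrightarrow> delta_star A (start A) w \<in> finals A"
      if w: "set w \<subseteq> Sig" for w
      unfolding D run[OF st w]
      using inj fs delta_star_in_states[OF assms st w] by (simp add: inj_on_image_mem_iff)
    then show ?thesis unfolding lang_def by auto
  qed
  ultimately show ?thesis by blast
qed

text \<open>Upper-bound principle: a machine whose reachable states lie in a finite set \<open>X\<close> is
  recognised by a complete DFA with at most \<open>card X\<close> states (its reachable part).\<close>
lemma dfa_from_machine:
  fixes d :: "'q \<Rightarrow> 'a \<Rightarrow> 'q"
  assumes "finite Sig" "finite X" and reach: "\<And>w. set w \<subseteq> Sig \<Longrightarrow> foldl d s w \<in> X"
  shows "\<exists>D :: (nat,'a) dfa. complete_dfa Sig D \<and> card (states D) \<le> card X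
            \<and> lang Sig D = run_lang Sig d s acc"
proof -
  define R where "R = {foldl d s w | w. set w \<subseteq> Sig}"
  define A where "A = (R, d, s, {t \<in> R. acc t})"
  have A: "states A = R" "delta A = d" "start A = s" "finals A = {t \<in> R. acc t}"
    unfolding A_def states_def delta_def start_def finals_def by auto
  have RX: "R \<subseteq> X" unfolding R_def using reach by auto
  have "complete_dfa Sig A"
    unfolding complete_dfa_def A
  proof (intro conjI ballI)
    show "finite Sig" "finite R" using assms RX finite_subset by auto
    show "s \<in> R" unfolding R_def by (auto intro: exI[of _ "[]"])
    show "{t \<in> R. acc t} \<subseteq> R" by auto
    fix t a assume "t \<in> R" "a \<in> Sig"
    then obtain w where "t = foldl d s w" "set w \<subseteq> Sig" unfolding R_def by auto
    then show "d t a \<in> R" unfolding R_def using \<open>a \<in> Sig\<close>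
      by (intro CollectI exI[of _ "w @ [a]"]) auto
  qed
  moreover have "lang Sig A = run_lang Sig d s acc"
    unfolding lang_def run_lang_def A delta_star_def R_def by blast
  moreover have "card (states A) \<le> card X" unfolding A using RX assms(2) by (rule card_mono[rotated])
  ultimately show ?thesis using dfa_rename_nat[of Sig A] by fastforce
qed

text \<open>Lower-bound principle (Myhill--Nerode): every complete DFA for the language of a machine
  has at least as many states as a set of reachable, pairwise distinguishable machine states.\<close>
lemma card_distinguishable_le_states:
  fixes d :: "'q \<Rightarrow> 'a \<Rightarrow> 'q"
  assumes D: "complete_dfa Sig D" "lang Sig D = run_lang Sig d s acc"
    and reach: "\<And>t. t \<in> T \<Longrightarrow> \<exists>w. set w \<subseteq> Sig \<and> foldl d s w = t"
    and dist: "\<And>t t'. t \<in> T \<Longrightarrow> t' \<in> T \<Longrightarrow> t \<noteq> t' \<Longrightarrow>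
         \<exists>z. set z \<subseteq> Sig \<and> acc (foldl d t z) \<noteq> acc (foldl d t' z)"
  shows "card T \<le> card (states D)"
proof -
  define W where "W t = (SOME w. set w \<subseteq> Sig \<and> foldl d s w = t)" for t
  have W: "set (W t) \<subseteq> Sig \<and> foldl d s (W t) = t" if "t \<in> T" for t
    unfolding W_def by (rule someI_ex) (use reach that in blast)
  define g where "g t = delta_star D (start D) (W t)" for t
  have st: "start D \<in> states D" "finite (states D)" using D(1) unfolding complete_dfa_def by auto
  have acc: "delta_star D (start D) (W t @ z) \<in> finals D \<longleftrightarrow> acc (foldl d t z)"
    if "t \<in> T" "set z \<subseteq> Sig" for t z
  proof -
    have "set (W t @ z) \<subseteq> Sig" using W[OF that(1)] that(2) by auto
    then have "delta_star D (start D) (W t @ z) \<in> finals D \<longleftrightarrow> acc (foldl d s (W t @ z))"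
      using D(2) unfolding lang_def run_lang_def by blast
    then show ?thesis using W[OF that(1)] by simp
  qed
  have "inj_on g T"
  proof (rule inj_onI, rule ccontr)
    fix t t' assume tt: "t \<in> T" "t' \<in> T" "g t = g t'" "t \<noteq> t'"
    then obtain z where z: "set z \<subseteq> Sig" "acc (foldl d t z) \<noteq> acc (foldl d t' z)"
      using dist by blast
    have "delta_star D (start D) (W t @ z) = delta_star D (start D) (W t' @ z)"
      using tt(3) unfolding g_def delta_star_def by simp
    then show False using acc[OF tt(1) z(1)] acc[OF tt(2) z(1)] z(2) by metis
  qed
  moreover have "g ` T \<subseteq> states D"
    unfolding g_def using delta_star_in_states[OF D(1) st(1)] W by auto
  ultimately show ?thesis by (rule card_inj_on_le[OF _ _ st(2)])
qed

lemma sc_eqI: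
  assumes "\<exists>D :: (nat,'a) dfa. complete_dfa Sig D \<and> card (states D) \<le> k \<and> lang Sig D = L"
    and "\<And>D :: (nat,'a) dfa. complete_dfa Sig D \<Longrightarrow> lang Sig D = L \<Longrightarrow> k \<le> card (states D)"
  shows "sc Sig L = k"
proof -
  obtain D :: "(nat,'a) dfa" where D: "complete_dfa Sig D" "card (states D) = k" "lang Sig D = L"
    using assms by (metis le_antisym)
  show ?thesis unfolding sc_def
  proof (rule Least_equality)
    show "\<exists>D :: (nat,'a) dfa. complete_dfa Sig D \<and> card (states D) = k \<and> lang Sig D = L"
      using D by blast
  next
    fix k' assume "\<exists>D :: (nat,'a) dfa. complete_dfa Sig D \<and> card (states D) = k' \<and> lang Sig D = L"
    then show "k \<le> k'" using assms(2) by blast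
  qed
qed

subsection \<open>A machine for \<open>L(M)\<^sup>* \<inter> L(N)\<close>\<close>

definition star_step :: "('s,'a) dfa \<Rightarrow> 's set \<Rightarrow> 'a \<Rightarrow> 's set" where
  "star_step M S a = (let T = (\<lambda>q. delta M q a) ` S in
     if T \<inter> finals M \<noteq> {} then insert (start M) T else T)"

text \<open>\<open>None\<close> marks the initial state (only the empty word read); it behaves like \<open>{start M}\<close>.\<close>
definition star_set :: "('s,'a) dfa \<Rightarrow> 's set option \<Rightarrow> 's set" where
  "star_set M x = (case x of None \<Rightarrow> {start M} | Some S \<Rightarrow> S)"

definition prod_step :: "('s,'a) dfa \<Rightarrow> ('t,'a) dfa \<Rightarrow> 's set option \<times> 't \<Rightarrow> 'a \<Rightarrow> 's set option \<times> 't"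
  where "prod_step M N t a = (Some (star_step M (star_set M (fst t)) a), delta N (snd t) a)"

definition prod_start :: "('s,'a) dfa \<Rightarrow> ('t,'a) dfa \<Rightarrow> 's set option \<times> 't" where
  "prod_start M N = (None, start N)"

definition prod_acc :: "('s,'a) dfa \<Rightarrow> ('t,'a) dfa \<Rightarrow> 's set option \<times> 't \<Rightarrow> bool" where
  "prod_acc M N t \<longleftrightarrow> snd t \<in> finals N \<and> (fst t = None \<or> star_set M (fst t) \<inter> finals M \<noteq> {})"

lemma prod_run_snd: "snd (foldl (prod_step M N) t w) = foldl (delta N) (snd t) w"
  by (induction w arbitrary: t) (auto simp: prod_step_def)

lemma prod_run_fst:
  "star_set M (fst (foldl (prod_step M N) t w)) = foldl (star_step M) (star_set M (fst t)) w"
  by (induction w arbitrary: t) (auto simp: prod_step_def star_set_def)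

lemma prod_run_fst_Some: "w \<noteq> [] \<Longrightarrow> fst (foldl (prod_step M N) t w) \<noteq> None"
  by (induction w arbitrary: t rule: rev_induct) (auto simp: prod_step_def)

lemma star_run_eq:
  assumes "set w \<subseteq> Sig"
  shows "foldl (star_step M) {start M} w =
     {delta_star M (start M) v | u v. w = u @ v \<and> u \<in> kstar (lang Sig M)}"
  using assms
proof (induction w rule: rev_induct)
  case Nil then show ?case by (auto simp: delta_star_def)
next
  case (snoc a w)
  define K where "K = kstar (lang Sig M)"
  define T where "T = {delta_star M (start M) (v @ [a]) | u v. w = u @ v \<and> u \<in> K}"
  have IH: "foldl (star_step M) {start M} w = {delta_star M (start M) v | u v. w = u @ v \<and> u \<in> K}"
    using snoc unfolding K_def by auto
  have moved: "(\<lambda>q. delta M q a) ` {delta_star M (start M) v | u v. w = u @ v \<and> u \<in> K} = T"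
    unfolding T_def by (auto simp: delta_star_def)
  have hit: "T \<inter> finals M \<noteq> {} \<longleftrightarrow> w @ [a] \<in> K"
  proof
    assume "T \<inter> finals M \<noteq> {}"
    then obtain u v where uv: "w = u @ v" "u \<in> K" "delta_star M (start M) (v @ [a]) \<in> finals M"
      unfolding T_def by blast
    have "v @ [a] \<in> lang Sig M" using snoc.prems uv unfolding lang_def by auto
    then show "w @ [a] \<in> K" unfolding K_def kstar_snoc_iff using uv(1,2) unfolding K_def by blast
  next
    assume "w @ [a] \<in> K"
    then obtain u v where uv: "w = u @ v" "u \<in> K" "v @ [a] \<in> lang Sig M"
      unfolding K_def kstar_snoc_iff by blast
    then have "delta_star M (start M) (v @ [a]) \<in> T \<inter> finals M"
      unfolding T_def lang_def by blast
    then show "T \<inter> finals M \<noteq> {}" by blast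
  qed
  have split: "{delta_star M (start M) v | u v. w @ [a] = u @ v \<and> u \<in> K}
     = T \<union> (if w @ [a] \<in> K then {start M} else {})" (is "?L = ?R")
  proof
    show "?L \<subseteq> ?R"
    proof
      fix x assume "x \<in> ?L"
      then obtain u v where uv: "x = delta_star M (start M) v" "w @ [a] = u @ v" "u \<in> K" by blast
      show "x \<in> ?R"
      proof (cases v rule: rev_cases)
        case Nil then show ?thesis using uv by (auto simp: delta_star_def)
      next
        case (snoc v' b)
        then have "w = u @ v'" "b = a" using uv by auto
        then show ?thesis unfolding T_def using uv snoc by blast
      qed
    qed
  next
    show "?R \<subseteq> ?L"
    proof
      fix x assume "x \<in> ?R"
      then consider "x \<in> T" | "w @ [a] \<in> K" "x = start M" by (auto split: if_splits)
      then show "x \<in> ?L"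
      proof cases
        case 1
        then obtain u v where "w = u @ v" "u \<in> K" "x = delta_star M (start M) (v @ [a])"
          unfolding T_def by blast
        then show ?thesis by (intro CollectI exI[of _ u] exI[of _ "v @ [a]"]) auto
      next
        case 2
        then show ?thesis
          by (intro CollectI exI[of _ "w @ [a]"] exI[of _ "[]"]) (auto simp: delta_star_def)
      qed
    qed
  qed
  have "foldl (star_step M) {start M} (w @ [a]) = star_step M (foldl (star_step M) {start M} w) a"
    by simp
  also have "\<dots> = (if T \<inter> finals M \<noteq> {} then insert (start M) T else T)"
    unfolding IH star_step_def Let_def moved ..
  also have "\<dots> = ?L" unfolding split hit by auto
  finally show ?case unfolding K_def .
qed

lemma star_run_accepts:
  assumes "set w \<subseteq> Sig" "w \<noteq> []"
  shows "foldl (star_step M) {start M} w \<inter> finals M \<noteq> {} \<longleftrightarrow> w \<in> kstar (lang Sig M)"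
proof
  assume "foldl (star_step M) {start M} w \<inter> finals M \<noteq> {}"
  then obtain u v where uv: "w = u @ v" "u \<in> kstar (lang Sig M)"
      "delta_star M (start M) v \<in> finals M"
    unfolding star_run_eq[OF assms(1)] by blast
  show "w \<in> kstar (lang Sig M)"
  proof (cases "v = []")
    case True then show ?thesis using uv by simp
  next
    case False
    have "v \<in> lang Sig M" using uv assms(1) unfolding lang_def by auto
    then show ?thesis using uv kstar_append by blast
  qed
next
  assume w: "w \<in> kstar (lang Sig M)"
  obtain x a where xa: "w = x @ [a]" using assms(2) by (cases w rule: rev_cases) auto
  then obtain u v where uv: "x = u @ v" "u \<in> kstar (lang Sig M)" "v @ [a] \<in> lang Sig M"
    using w kstar_snoc_iff by metis
  then have "delta_star M (start M) (v @ [a]) \<in> foldl (star_step M) {start M} w \<inter> finals M"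
    unfolding star_run_eq[OF assms(1)] lang_def using xa by auto
  then show "foldl (star_step M) {start M} w \<inter> finals M \<noteq> {}" by blast
qed

lemma prod_run_lang:
  "run_lang Sig (prod_step M N) (prod_start M N) (prod_acc M N) = kstar (lang Sig M) \<inter> lang Sig N"
proof -
  have "prod_acc M N (foldl (prod_step M N) (prod_start M N) w) \<longleftrightarrow>
        w \<in> kstar (lang Sig M) \<inter> lang Sig N" if w: "set w \<subseteq> Sig" for w
  proof (cases "w = []")
    case True then show ?thesis by (simp add: prod_acc_def prod_start_def lang_def delta_star_def)
  next
    case False
    have "snd (foldl (prod_step M N) (prod_start M N) w) = delta_star N (start N) w"
      by (simp add: prod_run_snd prod_start_def delta_star_def)
    moreover have "star_set M (fst (foldl (prod_step M N) (prod_start M N) w))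
        = foldl (star_step M) {start M} w"
      using prod_run_fst[of M N "prod_start M N" w] by (simp add: prod_start_def star_set_def)
    ultimately show ?thesis unfolding prod_acc_def
      using prod_run_fst_Some[OF False, of M N "prod_start M N"] star_run_accepts[OF w False, of M] w
      by (auto simp: lang_def)
  qed
  moreover have "kstar (lang Sig M) \<inter> lang Sig N \<subseteq> {w. set w \<subseteq> Sig}" unfolding lang_def by auto
  ultimately show ?thesis unfolding run_lang_def by auto
qed

subsection \<open>Upper bound\<close>

definition star_states :: "('s,'a) dfa \<Rightarrow> 's set set" where
  "star_states M = {S. S \<subseteq> states M \<and> S \<noteq> {} \<and> (S \<inter> finals M \<noteq> {} \<longrightarrow> start M \<in> S)
                       \<and> (finals M \<subseteq> {start M} \<longrightarrow> (\<exists>q. S = {q}))}"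

definition prod_states :: "('s,'a) dfa \<Rightarrow> ('t,'a) dfa \<Rightarrow> ('s set option \<times> 't) set" where
  "prod_states M N = insert (None, start N) (Some ` star_states M \<times> states N)"

lemma star_states_start: "complete_dfa Sig M \<Longrightarrow> {start M} \<in> star_states M"
  unfolding star_states_def complete_dfa_def by auto

lemma star_step_star_states:
  assumes M: "complete_dfa Sig M" and a: "a \<in> Sig" and S: "S \<in> star_states M"
  shows "star_step M S a \<in> star_states M"
proof -
  define T where "T = (\<lambda>q. delta M q a) ` S"
  have T: "T \<subseteq> states M" "T \<noteq> {}" using S M a unfolding T_def star_states_def complete_dfa_def by auto
  have step: "star_step M S a = (if T \<inter> finals M \<noteq> {} then insert (start M) T else T)"
    unfolding star_step_def T_def Let_def ..
  have "start M \<in> states M" using M unfolding complete_dfa_def by auto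
  moreover have "\<exists>q. star_step M S a = {q}" if F: "finals M \<subseteq> {start M}"
  proof -
    obtain q where "S = {q}" using S F unfolding star_states_def by auto
    then show ?thesis unfolding step T_def using F by auto
  qed
  ultimately show ?thesis using T unfolding star_states_def step by auto
qed

lemma prod_run_in_prod_states:
  assumes M: "complete_dfa Sig M" and N: "complete_dfa Sig N" and "set w \<subseteq> Sig"
  shows "foldl (prod_step M N) (prod_start M N) w \<in> prod_states M N"
  using assms(3)
proof (induction w rule: rev_induct)
  case Nil then show ?case by (simp add: prod_start_def prod_states_def)
next
  case (snoc a w)
  define t where "t = foldl (prod_step M N) (prod_start M N) w"
  have t: "star_set M (fst t) \<in> star_states M" "snd t \<in> states N"
    using snoc star_states_start[OF M] N unfolding t_def prod_states_def complete_dfa_def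
    by (auto simp: star_set_def)
  have "prod_step M N t a \<in> Some ` star_states M \<times> states N"
    using star_step_star_states[OF M _ t(1)] t(2) N snoc.prems
    unfolding prod_step_def complete_dfa_def by auto
  then show ?case unfolding t_def prod_states_def by simp
qed

lemma pow2_minus_quarter: "2 \<le> c \<Longrightarrow> 2 ^ c - 1 - 2 ^ (c - 2) = 3 * 2 ^ (c - 2) - (1::nat)"
proof -
  assume "2 \<le> c"
  define k where "k = c - 2"
  have c: "c = k + 2" using \<open>2 \<le> c\<close> unfolding k_def by simp
  show ?thesis unfolding c by simp
qed

text \<open>Nonempty subsets of \<open>Q\<close> that contain \<open>q0\<close> whenever they contain \<open>f\<close>: all nonempty sets
  except the \<open>2^(|Q|-2)\<close> sets containing \<open>f\<close> but not \<open>q0\<close>.\<close>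
lemma card_subsets_guarded:
  assumes "finite Q" "q0 \<in> Q" "f \<in> Q" "q0 \<noteq> f"
  shows "card {S. S \<subseteq> Q \<and> S \<noteq> {} \<and> (f \<in> S \<longrightarrow> q0 \<in> S)} = 3 * 2 ^ (card Q - 2) - 1"
proof -
  define Bad where "Bad = insert f ` Pow (Q - {q0, f})"
  have inj: "inj_on (insert f) (Pow (Q - {q0, f}))"
    unfolding inj_on_def by (metis Diff_iff PowD insert_absorb insert_iff insert_ident subsetD)
  have card_Bad: "card Bad = 2 ^ (card Q - 2)"
    unfolding Bad_def card_image[OF inj] using assms by (simp add: card_Pow card_Diff_subset)
  have eq: "{S. S \<subseteq> Q \<and> S \<noteq> {} \<and> (f \<in> S \<longrightarrow> q0 \<in> S)} = Pow Q - insert {} Bad"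
  proof (intro set_eqI iffI)
    fix S assume "S \<in> {S. S \<subseteq> Q \<and> S \<noteq> {} \<and> (f \<in> S \<longrightarrow> q0 \<in> S)}"
    then have S: "S \<subseteq> Q" "S \<noteq> {}" "f \<in> S \<longrightarrow> q0 \<in> S" by auto
    have "S \<notin> Bad"
    proof
      assume "S \<in> Bad"
      then obtain X where "S = insert f X" "X \<subseteq> Q - {q0, f}" unfolding Bad_def by auto
      then show False using S(3) assms(4) by auto
    qed
    then show "S \<in> Pow Q - insert {} Bad" using S by auto
  next
    fix S assume S: "S \<in> Pow Q - insert {} Bad"
    have "f \<in> S \<longrightarrow> q0 \<in> S"
    proof (rule impI, rule ccontr)
      assume "f \<in> S" "q0 \<notin> S"
      then have "S = insert f (S - {f})" "S - {f} \<in> Pow (Q - {q0, f})" using S by auto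
      then have "S \<in> Bad" unfolding Bad_def by blast
      then show False using S by blast
    qed
    then show "S \<in> {S. S \<subseteq> Q \<and> S \<noteq> {} \<and> (f \<in> S \<longrightarrow> q0 \<in> S)}" using S by auto
  qed
  have sub: "insert {} Bad \<subseteq> Pow Q" unfolding Bad_def using assms(3) by auto
  have "{} \<notin> Bad" "finite Bad" unfolding Bad_def using assms(1) by auto
  then have "card (Pow Q - insert {} Bad) = 2 ^ card Q - 1 - 2 ^ (card Q - 2)"
    using sub assms(1) card_Bad by (simp add: card_Diff_subset finite_subset card_Pow)
  moreover have "2 \<le> card Q"
    using card_mono[OF assms(1), of "{q0, f}"] assms(2-4) by simp
  ultimately show ?thesis unfolding eq using pow2_minus_quarter by simp
qed

text \<open>At most \<open>3\<cdot>2^(m-2) - 1\<close> sets occur: if some final state \<open>f\<close> differs from the start, use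
  the count above; otherwise only the \<open>m\<close> singletons occur.\<close>
lemma card_star_states:
  assumes M: "complete_dfa Sig M" and m: "card (states M) = m" "m \<ge> 2"
  shows "finite (star_states M) \<and> card (star_states M) \<le> 3 * 2 ^ (m - 2) - 1"
proof -
  have fin: "finite (states M)" and q0: "start M \<in> states M" and F: "finals M \<subseteq> states M"
    using M unfolding complete_dfa_def by auto
  have finite: "finite (star_states M)"
    by (rule finite_subset[of _ "Pow (states M)"]) (use fin in \<open>auto simp: star_states_def\<close>)
  show ?thesis
  proof (cases "finals M \<subseteq> {start M}")
    case True
    then have "star_states M \<subseteq> (\<lambda>q. {q}) ` states M" unfolding star_states_def by auto
    then have "card (star_states M) \<le> card ((\<lambda>q. {q}) ` states M)"
      using fin by (intro card_mono) auto
    also have "\<dots> \<le> m" using card_image_le[OF fin] m(1) by simp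
    finally have "card (star_states M) \<le> m" .
    moreover have "m \<le> 3 * 2 ^ (m - 2) - 1"
    proof -
      define k where "k = m - 2"
      have "k + 3 \<le> 3 * 2 ^ k" by (induction k) auto
      then show ?thesis using m(2) unfolding k_def by simp
    qed
    ultimately show ?thesis using finite by simp
  next
    case False
    then obtain f where f: "f \<in> finals M" "f \<noteq> start M" by auto
    have "star_states M \<subseteq> {S. S \<subseteq> states M \<and> S \<noteq> {} \<and> (f \<in> S \<longrightarrow> start M \<in> S)}"
      using f unfolding star_states_def by auto
    moreover have "finite {S. S \<subseteq> states M \<and> S \<noteq> {} \<and> (f \<in> S \<longrightarrow> start M \<in> S)}"
      using fin by simp
    ultimately have "card (star_states M) \<le> card {S. S \<subseteq> states M \<and> S \<noteq> {} \<and> (f \<in> S \<longrightarrow> start M \<in> S)}"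
      by (rule card_mono[rotated])
    then show ?thesis using card_subsets_guarded[OF fin q0 _ f(2)[symmetric]] f F m(1) finite by auto
  qed
qed

lemma card_prod_states:
  assumes "finite (star_states M)" "finite (states N)"
  shows "card (prod_states M N) = Suc (card (star_states M) * card (states N))"
  unfolding prod_states_def using assms by (simp add: card_cartesian_product card_image)

lemma size_bound_eq: "Suc ((3 * 2 ^ k - 1) * n) = 3 * 2 ^ k * n - n + (1::nat)"
  by (simp add: diff_mult_distrib)

lemma star_inter_upper_bound:
  fixes M :: "('s,'a) dfa" and N :: "('t,'a) dfa"
  assumes "m \<ge> 2" and M: "complete_dfa Sig M" "card (states M) = m"
    and N: "complete_dfa Sig N" "card (states N) = n"
  shows "\<exists>D :: (nat,'a) dfa. complete_dfa Sig D \<and> card (states D) \<le> 3 * 2 ^ (m - 2) * n - n + 1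
            \<and> lang Sig D = kstar (lang Sig M) \<inter> lang Sig N"
proof -
  have fin: "finite Sig" "finite (states N)" using N unfolding complete_dfa_def by auto
  obtain fS: "finite (star_states M)" and cS: "card (star_states M) \<le> 3 * 2 ^ (m - 2) - 1"
    using card_star_states[OF M assms(1)] by blast
  have "card (prod_states M N) \<le> Suc ((3 * 2 ^ (m - 2) - 1) * n)"
    unfolding card_prod_states[OF fS fin(2)] N(2) using cS by simp
  then have "card (prod_states M N) \<le> 3 * 2 ^ (m - 2) * n - n + 1" by (simp only: size_bound_eq)
  moreover have "finite (prod_states M N)" unfolding prod_states_def using fS fin by simp
  ultimately show ?thesis
    using dfa_from_machine[OF fin(1) _ prod_run_in_prod_states[OF M(1) N(1)],
        of "prod_acc M N"] prod_run_lang[of Sig M N] by (metis le_trans)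
qed

subsection \<open>Witness automata\<close>

text \<open>Letters are natural numbers \<open>8 q + c\<close>: the residue \<open>c\<close> selects the action and \<open>q\<close> its
  parameter.  Letters with any other residue or an out-of-range parameter act as the identity.\<close>
definition "l_hit = (1::nat)"
definition "l_swap q = 8 * q + (2::nat)"
definition "l_jump q = 8 * q + (3::nat)"
definition "l_reset p = 8 * p + (4::nat)"
definition "l_testN p = 8 * p + (5::nat)"
definition "l_testM q = 8 * q + (6::nat)"

lemmas letter_defs = l_hit_def l_swap_def l_jump_def l_reset_def l_testN_def l_testM_def

lemma mod_div_8: "(8 * q + c) mod 8 = c mod 8" "(8 * q + c) div 8 = q + c div 8" for q c :: nat
  by simp_all

text \<open>\<open>M\<close> on states \<open>0..m-1\<close> (start \<open>0\<close>, final \<open>m-1\<close>): \<open>hit\<close> sends \<open>0\<close> to \<open>m-1\<close>; \<open>swap q\<close> exchanges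
  \<open>q\<close> and \<open>m-1\<close>; \<open>jump q\<close> sends \<open>0\<close> to \<open>q\<close>; \<open>testN\<close> sends everything to \<open>m-1\<close>; \<open>testM q\<close> sends \<open>q\<close>
  to \<open>m-1\<close> and everything else to \<open>0\<close>.\<close>
definition wit_deltaM :: "nat \<Rightarrow> nat \<Rightarrow> nat \<Rightarrow> nat" where
  "wit_deltaM m k x = (let c = k mod 8; q = k div 8 in
     if c = 1 then (if x = 0 then m - 1 else x)
     else if c = 2 then (if q < m then (if x = m - 1 then q else if x = q then m - 1 else x) else x)
     else if c = 3 then (if x = 0 \<and> q < m then q else x)
     else if c = 5 then m - 1
     else if c = 6 then (if x = q then m - 1 else 0)
     else x)"

text \<open>\<open>N\<close> on states \<open>0..n-1\<close> (start and final \<open>0\<close>): \<open>reset p\<close> moves to \<open>p\<close>; \<open>testN p\<close> moves \<open>p\<close> to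
  \<open>0\<close> and everything else to \<open>1\<close>; \<open>testM\<close> moves to \<open>0\<close>.\<close>
definition wit_deltaN :: "nat \<Rightarrow> nat \<Rightarrow> nat \<Rightarrow> nat" where
  "wit_deltaN n k p = (let c = k mod 8; q = k div 8 in
     if c = 4 then (if q < n then q else p)
     else if c = 5 then (if p = q then 0 else 1)
     else if c = 6 then 0 else p)"

definition wit_M :: "nat \<Rightarrow> (nat,nat) dfa" where
  "wit_M m = ({..<m}, \<lambda>x k. wit_deltaM m k x, 0, {m - 1})"
definition wit_N :: "nat \<Rightarrow> (nat,nat) dfa" where
  "wit_N n = ({..<n}, \<lambda>p k. wit_deltaN n k p, 0, {0})"
definition wit_Sig :: "nat \<Rightarrow> nat \<Rightarrow> nat set" where
  "wit_Sig m n = {..<8 * (m + n)}"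

lemma wit_M_simps: "states (wit_M m) = {..<m}" "delta (wit_M m) = (\<lambda>x k. wit_deltaM m k x)"
  "start (wit_M m) = 0" "finals (wit_M m) = {m - 1}"
  unfolding wit_M_def states_def delta_def start_def finals_def by auto

lemma wit_N_simps: "states (wit_N n) = {..<n}" "delta (wit_N n) = (\<lambda>p k. wit_deltaN n k p)"
  "start (wit_N n) = 0" "finals (wit_N n) = {0}"
  unfolding wit_N_def states_def delta_def start_def finals_def by auto

lemma wit_deltaM_letters:
  "wit_deltaM m 0 x = x"
  "wit_deltaM m l_hit x = (if x = 0 then m - 1 else x)"
  "q < m \<Longrightarrow> wit_deltaM m (l_swap q) x = (if x = m - 1 then q else if x = q then m - 1 else x)"
  "q < m \<Longrightarrow> wit_deltaM m (l_jump q) x = (if x = 0 then q else x)"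
  "wit_deltaM m (l_reset p) x = x"
  "wit_deltaM m (l_testN p) x = m - 1"
  "wit_deltaM m (l_testM q) x = (if x = q then m - 1 else 0)"
  unfolding wit_deltaM_def Let_def letter_defs mod_div_8 by simp_all

lemma wit_deltaN_letters:
  "wit_deltaN n 0 p = p"
  "wit_deltaN n l_hit p = p"
  "wit_deltaN n (l_swap q) p = p"
  "wit_deltaN n (l_jump q) p = p"
  "q < n \<Longrightarrow> wit_deltaN n (l_reset q) p = q"
  "wit_deltaN n (l_testN q) p = (if p = q then 0 else 1)"
  "wit_deltaN n (l_testM q) p = 0"
  unfolding wit_deltaN_def Let_def letter_defs mod_div_8 by simp_all

lemma letters_in_wit_Sig:
  "m \<ge> 2 \<Longrightarrow> l_hit \<in> wit_Sig m n" "m \<ge> 2 \<Longrightarrow> 0 \<in> wit_Sig m n"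
  "q < m \<Longrightarrow> l_swap q \<in> wit_Sig m n" "q < m \<Longrightarrow> l_jump q \<in> wit_Sig m n"
  "p < n \<Longrightarrow> l_reset p \<in> wit_Sig m n" "p < n \<Longrightarrow> l_testN p \<in> wit_Sig m n"
  "q < m \<Longrightarrow> l_testM q \<in> wit_Sig m n"
  unfolding wit_Sig_def letter_defs by auto

text \<open>The witnesses are complete DFAs with \<open>m\<close> and \<open>n\<close> states (for \<open>testN\<close>, \<open>N\<close> needs state \<open>1\<close>).\<close>
lemma wit_complete:
  assumes "m \<ge> 2" "n \<ge> 2"
  shows "complete_dfa (wit_Sig m n) (wit_M m)" "complete_dfa (wit_Sig m n) (wit_N n)"
  using assms unfolding complete_dfa_def wit_M_simps wit_N_simps wit_Sig_def
  by (auto simp: wit_deltaM_def wit_deltaN_def Let_def)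

lemma star_states_wit:
  "m \<ge> 2 \<Longrightarrow> star_states (wit_M m) = {S. S \<subseteq> {..<m} \<and> S \<noteq> {} \<and> (m - 1 \<in> S \<longrightarrow> 0 \<in> S)}"
  unfolding star_states_def wit_M_simps by auto

lemma star_step_wit:
  "star_step (wit_M m) S a =
     (let T = (\<lambda>x. wit_deltaM m a x) ` S in if m - 1 \<in> T then insert 0 T else T)"
  unfolding star_step_def wit_M_simps Let_def by auto

lemma prod_step_wit:
  "prod_step (wit_M m) (wit_N n) (x, p) a =
     (Some (star_step (wit_M m) (star_set (wit_M m) x) a), wit_deltaN n a p)"
  unfolding prod_step_def wit_N_simps by simp

lemma prod_acc_wit:
  "prod_acc (wit_M m) (wit_N n) (Some S, p) \<longleftrightarrow> p = 0 \<and> m - 1 \<in> S"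
  "prod_acc (wit_M m) (wit_N n) (None, p) \<longleftrightarrow> p = 0"
  unfolding prod_acc_def wit_N_simps wit_M_simps star_set_def by auto

lemma wit_step_first:
  "m \<ge> 2 \<Longrightarrow> prod_step (wit_M m) (wit_N n) (None, 0) 0 = (Some {0}, 0)"
  unfolding prod_step_wit star_step_wit star_set_def
  by (simp add: wit_M_simps wit_deltaM_letters wit_deltaN_letters)

lemma wit_step_hit:
  assumes "0 \<in> S" "m - 1 \<notin> S"
  shows "prod_step (wit_M m) (wit_N n) (Some S, p) l_hit = (Some (insert (m - 1) S), p)"
proof -
  have "(\<lambda>x. wit_deltaM m l_hit x) ` S = insert (m - 1) (S - {0})"
    unfolding wit_deltaM_letters using assms(1) by (auto simp: image_iff)
  then have "star_step (wit_M m) S l_hit = insert (m - 1) S"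
    unfolding star_step_wit Let_def using assms(1) by auto
  then show ?thesis by (simp add: prod_step_wit star_set_def wit_deltaN_letters)
qed

lemma wit_steps_add:
  assumes "m \<ge> 2" "0 \<in> S" "m - 1 \<notin> S" "0 < q" "q < m - 1" "q \<notin> S"
  shows "foldl (prod_step (wit_M m) (wit_N n)) (Some S, p) [l_hit, l_swap q] = (Some (insert q S), p)"
proof -
  have "(\<lambda>x. wit_deltaM m (l_swap q) x) ` insert (m - 1) S = insert q S"
  proof -
    have "\<And>x. x \<in> S \<Longrightarrow> wit_deltaM m (l_swap q) x = x" using assms by (auto simp: wit_deltaM_letters)
    then have "(\<lambda>x. wit_deltaM m (l_swap q) x) ` S = S" by simp
    then show ?thesis using assms by (simp add: wit_deltaM_letters)
  qed
  then have "star_step (wit_M m) (insert (m - 1) S) (l_swap q) = insert q S"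
    unfolding star_step_wit Let_def using assms by auto
  then show ?thesis using wit_step_hit[OF assms(2,3)]
    by (simp add: prod_step_wit star_set_def wit_deltaN_letters)
qed

lemma wit_step_jump:
  assumes "0 \<in> S" "m - 1 \<notin> S" "s \<in> S" "0 < s" "s < m"
  shows "prod_step (wit_M m) (wit_N n) (Some S, p) (l_jump s) = (Some (S - {0}), p)"
proof -
  have "(\<lambda>x. wit_deltaM m (l_jump s) x) ` S = S - {0}"
    unfolding wit_deltaM_letters(4)[OF assms(5)] using assms(1,3,4) by (auto simp: image_iff)
  then have "star_step (wit_M m) S (l_jump s) = S - {0}"
    unfolding star_step_wit Let_def using assms(2) by auto
  then show ?thesis by (simp add: prod_step_wit star_set_def wit_deltaN_letters)
qed

lemma wit_step_reset:
  assumes "m - 1 \<in> S \<longrightarrow> 0 \<in> S" "p' < n"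
  shows "prod_step (wit_M m) (wit_N n) (Some S, p) (l_reset p') = (Some S, p')"
proof -
  have "star_step (wit_M m) S (l_reset p') = S"
    unfolding star_step_wit Let_def wit_deltaM_letters using assms(1) by auto
  then show ?thesis by (simp add: prod_step_wit star_set_def wit_deltaN_letters(5)[OF assms(2)])
qed

lemma wit_reach_middle:
  assumes "m \<ge> 2" "finite T" "T \<subseteq> {0<..<m - 1}"
  shows "\<exists>w. set w \<subseteq> wit_Sig m n \<and>
     foldl (prod_step (wit_M m) (wit_N n)) (Some {0}, 0) w = (Some (insert 0 T), 0)"
  using assms(2,3)
proof (induction T rule: finite_induct)
  case empty then show ?case by (intro exI[of _ "[]"]) auto
next
  case (insert q T)
  then obtain w where w: "set w \<subseteq> wit_Sig m n"
    "foldl (prod_step (wit_M m) (wit_N n)) (Some {0}, 0) w = (Some (insert 0 T), 0)" by auto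
  have q: "0 < q" "q < m - 1" using insert.prems by auto
  have "foldl (prod_step (wit_M m) (wit_N n)) (Some (insert 0 T), 0) [l_hit, l_swap q]
      = (Some (insert q (insert 0 T)), 0)"
  proof (rule wit_steps_add[OF assms(1) _ _ q])
    show "m - 1 \<notin> insert 0 T" using insert.prems assms(1) by auto
    show "q \<notin> insert 0 T" using insert.hyps(2) q by auto
  qed simp
  moreover have "set (w @ [l_hit, l_swap q]) \<subseteq> wit_Sig m n"
    using w q assms(1) letters_in_wit_Sig by auto
  ultimately show ?case using w by (intro exI[of _ "w @ [l_hit, l_swap q]"]) (simp add: insert_commute)
qed

text \<open>Every state in \<open>prod_states\<close> of the witnesses is reachable: first collect the middle
  states, then add \<open>m-1\<close> with \<open>hit\<close> or drop \<open>0\<close> with \<open>jump\<close>, finally set \<open>N\<close> with \<open>reset\<close>.\<close>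
lemma wit_reachable:
  assumes "m \<ge> 2" "S \<in> star_states (wit_M m)" "p < n"
  shows "\<exists>w. set w \<subseteq> wit_Sig m n \<and>
     foldl (prod_step (wit_M m) (wit_N n)) (prod_start (wit_M m) (wit_N n)) w = (Some S, p)"
proof -
  let ?run = "foldl (prod_step (wit_M m) (wit_N n))"
  define T where "T = S - {0, m - 1}"
  have S: "S \<subseteq> {..<m}" "S \<noteq> {}" "m - 1 \<in> S \<longrightarrow> 0 \<in> S"
    using assms(2) unfolding star_states_wit[OF assms(1)] by auto
  have "finite T" "T \<subseteq> {0<..<m - 1}" unfolding T_def using S(1) by (auto intro: finite_subset)
  then obtain w where w: "set w \<subseteq> wit_Sig m n" "?run (Some {0}, 0) w = (Some (insert 0 T), 0)"
    using wit_reach_middle[OF assms(1)] by blast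
  have w0: "?run (prod_start (wit_M m) (wit_N n)) (0 # w) = (Some (insert 0 T), 0)"
    using w wit_step_first[OF assms(1)] by (simp add: prod_start_def wit_N_simps)
  have T0: "0 \<in> insert 0 T" "m - 1 \<notin> insert 0 T" using assms(1) unfolding T_def by auto
  have letters: "set (0 # w @ [l_reset p]) \<subseteq> wit_Sig m n" "l_hit \<in> wit_Sig m n"
    using w assms letters_in_wit_Sig by auto
  consider (plain) "0 \<in> S" "m - 1 \<notin> S" | (final) "0 \<in> S" "m - 1 \<in> S" | (no_start) "0 \<notin> S"
    using S by blast
  then show ?thesis
  proof cases
    case plain
    then have "S = insert 0 T" unfolding T_def by auto
    then show ?thesis using w0 letters wit_step_reset[OF S(3) assms(3)]
      by (intro exI[of _ "0 # w @ [l_reset p]"]) auto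
  next
    case final
    then have "S = insert (m - 1) (insert 0 T)" unfolding T_def by auto
    then have "?run (prod_start (wit_M m) (wit_N n)) (0 # w @ [l_hit, l_reset p]) = (Some S, p)"
      using w0 wit_step_hit[OF T0] wit_step_reset[OF S(3) assms(3)] by simp
    then show ?thesis using letters by (intro exI[of _ "0 # w @ [l_hit, l_reset p]"]) auto
  next
    case no_start
    then have "m - 1 \<notin> S" "S = T" using S(3) unfolding T_def by auto
    obtain s where s: "s \<in> S" using S(2) by auto
    then have s': "0 < s" "s < m" "s \<in> insert 0 T" using no_start S(1) \<open>S = T\<close> by (auto intro!: gr0I)
    have "insert 0 T - {0} = S" using \<open>S = T\<close> no_start by auto
    then have "?run (prod_start (wit_M m) (wit_N n)) (0 # w @ [l_jump s, l_reset p]) = (Some S, p)"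
      using w0 wit_step_jump[OF T0 s'(3) s'(1) s'(2)] wit_step_reset[OF S(3) assms(3)] by simp
    moreover have "l_jump s \<in> wit_Sig m n" using s' letters_in_wit_Sig by auto
    ultimately show ?thesis using letters by (intro exI[of _ "0 # w @ [l_jump s, l_reset p]"]) auto
  qed
qed

lemma wit_testM:
  assumes "m \<ge> 2"
  shows "prod_acc (wit_M m) (wit_N n) (prod_step (wit_M m) (wit_N n) (x, p) (l_testM q))
           \<longleftrightarrow> q \<in> star_set (wit_M m) x"
proof -
  have "m - 1 \<in> star_step (wit_M m) (star_set (wit_M m) x) (l_testM q) \<longleftrightarrow> q \<in> star_set (wit_M m) x"
    unfolding star_step_wit Let_def wit_deltaM_letters using assms by (auto simp: image_iff)
  then show ?thesis unfolding prod_step_wit prod_acc_wit wit_deltaN_letters by simp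
qed

lemma wit_testN:
  assumes "S \<noteq> {}"
  shows "prod_acc (wit_M m) (wit_N n) (prod_step (wit_M m) (wit_N n) (Some S, p) (l_testN p'))
           \<longleftrightarrow> p = p'"
proof -
  have "m - 1 \<in> star_step (wit_M m) S (l_testN p')"
    unfolding star_step_wit Let_def wit_deltaM_letters using assms by auto
  then show ?thesis unfolding prod_step_wit prod_acc_wit wit_deltaN_letters star_set_def by simp
qed

text \<open>Two set-states are told apart by \<open>testM\<close> if the sets differ, by \<open>testN\<close> otherwise.\<close>
lemma wit_distinguish_Some:
  assumes "m \<ge> 2" "S \<in> star_states (wit_M m)" "S' \<in> star_states (wit_M m)"
    and "(S, p) \<noteq> (S', p')" "p < n"
  shows "\<exists>z. set z \<subseteq> wit_Sig m n \<and>
     prod_acc (wit_M m) (wit_N n) (foldl (prod_step (wit_M m) (wit_N n)) (Some S, p) z)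
       \<noteq> prod_acc (wit_M m) (wit_N n) (foldl (prod_step (wit_M m) (wit_N n)) (Some S', p') z)"
proof (cases "S = S'")
  case False
  then obtain q where q: "(q \<in> S) \<noteq> (q \<in> S')" by blast
  then have "q < m" using assms(2,3) unfolding star_states_wit[OF assms(1)] by auto
  then show ?thesis using q wit_testM[OF assms(1), of n "Some S" p q] wit_testM[OF assms(1), of n "Some S'" p' q]
    by (intro exI[of _ "[l_testM q]"]) (auto simp: star_set_def letters_in_wit_Sig)
next
  case True
  have "S \<noteq> {}" using assms(2) unfolding star_states_def by auto
  then show ?thesis using True assms(4,5) wit_testN[of S m n p p] wit_testN[of S m n p' p]
    by (intro exI[of _ "[l_testN p]"]) (auto simp: letters_in_wit_Sig)
qed

lemma wit_distinguishable:
  assumes "m \<ge> 2" "t \<in> prod_states (wit_M m) (wit_N n)" "t' \<in> prod_states (wit_M m) (wit_N n)"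
    and "t \<noteq> t'"
  shows "\<exists>z. set z \<subseteq> wit_Sig m n \<and>
     prod_acc (wit_M m) (wit_N n) (foldl (prod_step (wit_M m) (wit_N n)) t z)
       \<noteq> prod_acc (wit_M m) (wit_N n) (foldl (prod_step (wit_M m) (wit_N n)) t' z)"
proof -
  let ?acc = "prod_acc (wit_M m) (wit_N n)" and ?run = "foldl (prod_step (wit_M m) (wit_N n))"
  have states: "prod_states (wit_M m) (wit_N n) = insert (None, 0) (Some ` star_states (wit_M m) \<times> {..<n})"
    unfolding prod_states_def wit_N_simps ..
  text \<open>The initial state accepts; an accepting set-state contains \<open>m-1\<close>, which \<open>{0}\<close> does not.\<close>
  have initial: "\<exists>z. set z \<subseteq> wit_Sig m n \<and> ?acc (?run (None, 0) z) \<noteq> ?acc (?run (Some S, p) z)"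
    if "S \<in> star_states (wit_M m)" for S p
  proof (cases "p = 0 \<and> m - 1 \<in> S")
    case False then show ?thesis by (intro exI[of _ "[]"]) (auto simp: prod_acc_wit)
  next
    case True
    have "m - 1 \<notin> star_set (wit_M m) None" using assms(1) by (simp add: star_set_def wit_M_simps)
    moreover have "l_testM (m - 1) \<in> wit_Sig m n" using assms(1) letters_in_wit_Sig(7) by simp
    ultimately show ?thesis
      using True wit_testM[OF assms(1), of n None 0 "m - 1"] wit_testM[OF assms(1), of n "Some S" p "m - 1"]
      by (intro exI[of _ "[l_testM (m - 1)]"]) (auto simp: star_set_def letters_in_wit_Sig)
  qed
  have shape: "t = (None, 0) \<or> (\<exists>S p. t = (Some S, p) \<and> S \<in> star_states (wit_M m) \<and> p < n)"
    if "t \<in> prod_states (wit_M m) (wit_N n)" for t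
    using that unfolding states by auto
  consider (Some_Some) S p S' p' where "t = (Some S, p)" "t' = (Some S', p')"
      "S \<in> star_states (wit_M m)" "S' \<in> star_states (wit_M m)" "p < n"
    | (None_Some) S' p' where "t = (None, 0)" "t' = (Some S', p')" "S' \<in> star_states (wit_M m)"
    | (Some_None) S p where "t = (Some S, p)" "t' = (None, 0)" "S \<in> star_states (wit_M m)"
    using shape[OF assms(2)] shape[OF assms(3)] assms(4) by blast
  then show ?thesis
  proof cases
    case Some_Some
    then show ?thesis using wit_distinguish_Some[OF assms(1)] assms(4) by simp
  next
    case None_Some
    then show ?thesis using initial by simp
  next
    case Some_None
    then obtain z where "set z \<subseteq> wit_Sig m n" "?acc (?run (None, 0) z) \<noteq> ?acc (?run (Some S, p) z)"
      using initial by blast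
    then show ?thesis using Some_None by (intro exI[of _ z]) auto
  qed
qed

lemma card_prod_states_wit:
  assumes "m \<ge> 2"
  shows "card (prod_states (wit_M m) (wit_N n)) = 3 * 2 ^ (m - 2) * n - n + 1"
proof -
  have "card (star_states (wit_M m)) = 3 * 2 ^ (m - 2) - 1"
    unfolding star_states_wit[OF assms] using card_subsets_guarded[of "{..<m}" 0 "m - 1"] assms by simp
  moreover have "finite (star_states (wit_M m))" unfolding star_states_wit[OF assms] by simp
  ultimately have "card (prod_states (wit_M m) (wit_N n)) = Suc (card (star_states (wit_M m)) * n)"
    using card_prod_states[of "wit_M m" "wit_N n"] by (simp add: wit_N_simps)
  also have "\<dots> = Suc ((3 * 2 ^ (m - 2) - 1) * n)" using \<open>card (star_states (wit_M m)) = _\<close> by simp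
  also have "\<dots> = 3 * 2 ^ (m - 2) * n - n + 1" by (rule size_bound_eq)
  finally show ?thesis .
qed

lemma wit_lower_bound:
  assumes "m \<ge> 2" and D: "complete_dfa (wit_Sig m n) D"
    "lang (wit_Sig m n) D = kstar (lang (wit_Sig m n) (wit_M m)) \<inter> lang (wit_Sig m n) (wit_N n)"
  shows "3 * 2 ^ (m - 2) * n - n + 1 \<le> card (states D)"
proof -
  have "card (prod_states (wit_M m) (wit_N n)) \<le> card (states D)"
  proof (rule card_distinguishable_le_states[OF D(1) D(2)[folded prod_run_lang]])
    fix t assume "t \<in> prod_states (wit_M m) (wit_N n)"
    then consider "t = prod_start (wit_M m) (wit_N n)"
      | S p where "t = (Some S, p)" "S \<in> star_states (wit_M m)" "p < n"
      unfolding prod_states_def prod_start_def wit_N_simps by auto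
    then show "\<exists>w. set w \<subseteq> wit_Sig m n \<and>
        foldl (prod_step (wit_M m) (wit_N n)) (prod_start (wit_M m) (wit_N n)) w = t"
      by cases (auto intro: exI[of _ "[]"] dest: wit_reachable[OF assms(1)])
  qed (use wit_distinguishable[OF assms(1)] in blast)
  then show ?thesis using card_prod_states_wit[OF assms(1)] by simp
qed

theorem theorem6:
  fixes m n :: nat
  assumes "m \<ge> 2" and "n \<ge> 2"
  shows "(\<forall>(Sig :: 'a set) (M :: ('s,'a) dfa) (N :: ('t,'a) dfa).
            complete_dfa Sig M \<and> card (states M) = m \<and>
            complete_dfa Sig N \<and> card (states N) = n \<longrightarrow>
            (\<exists>D :: (nat,'a) dfa. complete_dfa Sig D \<and>
                card (states D) \<le> 3 * 2 ^ (m - 2) * n - n + 1 \<and>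
                lang Sig D = kstar (lang Sig M) \<inter> lang Sig N))
       \<and> (\<exists>(Sig :: nat set) (M :: (nat,nat) dfa) (N :: (nat,nat) dfa).
            complete_dfa Sig M \<and> card (states M) = m \<and>
            complete_dfa Sig N \<and> card (states N) = n \<and>
            sc Sig (kstar (lang Sig M) \<inter> lang Sig N) = 3 * 2 ^ (m - 2) * n - n + 1)"
proof -
  have sizes: "card (states (wit_M m)) = m" "card (states (wit_N n)) = n"
    by (simp_all add: wit_M_simps wit_N_simps)
  have "sc (wit_Sig m n) (kstar (lang (wit_Sig m n) (wit_M m)) \<inter> lang (wit_Sig m n) (wit_N n))
          = 3 * 2 ^ (m - 2) * n - n + 1"
    by (rule sc_eqI[OF star_inter_upper_bound[OF assms(1) wit_complete(1)[OF assms] sizes(1)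
          wit_complete(2)[OF assms] sizes(2)] wit_lower_bound[OF assms(1)]])
  then show ?thesis using star_inter_upper_bound[OF assms(1)] wit_complete[OF assms] sizes by blast
qed

end
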